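(* Let $\{a_n\}_{n\ge 0}$ be a sequence of positive real numbers. Suppose there are real numbers $c>0$ and $0<\alpha\le\beta$ such that $\mathscr{R}^2 a_n = a_na_{n+2}/a_{n+1}^2$ has a Puiseux-type approximation of the form \[ \mathscr{R}^2 a_n = 1+\frac{c}{n^{\alpha}}+\cdots+o\!\left(\frac{1}{n^{\beta}}\right), \] i.e. there exist an integer $m\ge 1$, real exponents $\alpha=\alpha_1<\alpha_2<\cdots<\alpha_m$ and real coefficients $c_1=c,c_2,\dots,c_m$ such that $\lim_{n\to\infty} n^{\beta}\bigl(\mathscr{R}^2a_n-1-\sum_{i=1}^m c_i n^{-\alpha_i}\bigr)=0$. Then $\{a_n\}_{n\ge0}$ is asymptotically $r$-log-convex for \[ r=\begin{cases}\lfloor \beta/\alpha\rfloor, & \text{if } \alpha<2,\\[3pt] \left\lfloor \frac{\beta-\alpha}{2}\right\rfloor+1, & \text{if } \alpha\ge 2.\end{cases} \]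
   Context: $\mathscr{L}a_n=a_na_{n+2}-a_{n+1}^2$ and $\mathscr{L}^k a_n=\mathscr{L}(\mathscr{L}^{k-1}a_n)$. A sequence is $r$-log-convex if $\{\mathscr{L}a_n\},\{\mathscr{L}^2a_n\},\dots,\{\mathscr{L}^r a_n\}$ are all nonnegative sequences; it is asymptotically $r$-log-convex if there is $N$ such that $\mathscr{L}^k a_n\ge 0$ for all $k=1,\dots,r$ and all $n\ge N$. A Puiseux-type approximation of $f_n$ is $g_n=\sum_{i=0}^m c_i n^{-\alpha_i}$ ($\alpha_0<\cdots<\alpha_m$) with $n^{\alpha_m}(f_n-g_n)\to 0$; trailing terms are abbreviated with little-o notation. $\lfloor x\rfloor$ is the floor of $x$. *)

theory Defs
  imports Complex_Main
begin

definition Lop :: "(nat \<Rightarrow> real) \<Rightarrow> (nat \<Rightarrow> real)" where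
  "Lop a = (\<lambda>n. a n * a (n + 2) - (a (n + 1))\<^sup>2)"

definition asymp_r_log_convex :: "nat \<Rightarrow> (nat \<Rightarrow> real) \<Rightarrow> bool" where
  "asymp_r_log_convex r a \<longleftrightarrow>
     (\<exists>N. \<forall>k\<in>{1..r}. \<forall>n\<ge>N. (Lop ^^ k) a n \<ge> 0)"

end

theory Submission
  imports Defs "HOL-Library.Landau_Symbols" "HOL-Real_Asymp.Real_Asymp"
begin

text \<open>
  Write \<open>x = \<R>\<^sup>2 b - 1\<close>, so that \<open>\<L> b n = b(n+1)^2 x(n)\<close> and
  \<open>\<R>\<^sup>2 (\<L> b) n = (1 + x(n+1))^2 \<R>\<^sup>2 x(n)\<close>. Suppose \<open>x(n) = n^(-g) (C + v(n)) + o(n^(-d))\<close>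
  with \<open>C > 0\<close> and a remainder \<open>v\<close> of positive order whose \<open>i\<close>-th differences decay
  \<open>i\<close> powers of \<open>n\<close> faster. Then \<open>\<L> b\<close> is eventually positive, and a discrete Taylor
  expansion shows that \<open>\<L> b\<close> satisfies the same hypothesis with exponent \<open>min g 2\<close>
  (from the terms \<open>2 x(n+1) \<approx> 2 C n^(-g)\<close> and \<open>\<R>\<^sup>2 x(n) - 1 \<approx> g n^(-2)\<close>, both
  positive) and error \<open>o(n^(-(d-g)))\<close>. Starting from \<open>(g, d) = (\<alpha>, \<beta>)\<close>, the
  \<open>k\<close>-th iterate is therefore eventually positive as long as
  \<open>\<alpha> + (k - 1) min \<alpha> 2 \<le> \<beta>\<close>, which is the stated bound on \<open>r\<close>.
\<close>

section \<open>Forward differences and power weights\<close>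

definition fdiff :: "(nat \<Rightarrow> real) \<Rightarrow> nat \<Rightarrow> real" where
  "fdiff u = (\<lambda>n. u (Suc n) - u n)"

lemma funpow_fdiff_Suc: "(fdiff ^^ Suc i) u = (fdiff ^^ i) (fdiff u)"
  unfolding funpow_Suc_right by simp

lemma funpow_fdiff_add: "(fdiff ^^ i) (\<lambda>n. u n + v n) = (\<lambda>n. (fdiff ^^ i) u n + (fdiff ^^ i) v n)"
  by (induction i) (auto simp: fdiff_def)

lemma funpow_fdiff_diff: "(fdiff ^^ i) (\<lambda>n. u n - v n) = (\<lambda>n. (fdiff ^^ i) u n - (fdiff ^^ i) v n)"
  by (induction i) (auto simp: fdiff_def)

lemma funpow_fdiff_cmult: "(fdiff ^^ i) (\<lambda>n. c * u n) = (\<lambda>n. c * (fdiff ^^ i) u n)"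
  by (induction i) (auto simp: fdiff_def algebra_simps)

lemma funpow_fdiff_shift: "(fdiff ^^ i) (\<lambda>n. u (Suc n)) = (\<lambda>n. (fdiff ^^ i) u (Suc n))"
  by (induction i) (auto simp: fdiff_def)

lemma funpow_fdiff_const: "(fdiff ^^ Suc i) (\<lambda>n. c) = (\<lambda>n. 0)"
  by (induction i) (simp_all add: fdiff_def)

lemma funpow_fdiff_zero [simp]: "(fdiff ^^ i) (\<lambda>n. 0) = (\<lambda>n. 0)"
  by (induction i) (simp_all add: fdiff_def)

lemma funpow_fdiff_eventually_cong:
  assumes "eventually (\<lambda>n. u n = v n) sequentially"
  shows "eventually (\<lambda>n. (fdiff ^^ i) u n = (fdiff ^^ i) v n) sequentially"
proof -
  from assms obtain N where "\<forall>n\<ge>N. u n = v n" by (auto simp: eventually_sequentially)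
  then have "\<forall>n\<ge>N. (fdiff ^^ i) u n = (fdiff ^^ i) v n"
    by (induction i) (auto simp: fdiff_def)
  then show ?thesis by (auto simp: eventually_sequentially)
qed

lemma powr_bigo_powr_iff: "(\<lambda>n::nat. real n powr p) \<in> O(\<lambda>n. real n powr q) \<longleftrightarrow> p \<le> q"
  by (intro powr_bigo_iff filterlim_real_sequentially) simp

lemma bigo_powr_mono:
  "f \<in> O(\<lambda>n. real n powr p) \<Longrightarrow> p \<le> q \<Longrightarrow> f \<in> O(\<lambda>n. real n powr q)"
  by (erule landau_o.big_trans) (simp add: powr_bigo_powr_iff)

lemma smallo_powr_mono:
  "f \<in> o(\<lambda>n. real n powr p) \<Longrightarrow> p \<le> q \<Longrightarrow> f \<in> o(\<lambda>n. real n powr q)"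
  by (erule landau_o.small_big_trans) (simp add: powr_bigo_powr_iff)

lemma bigo_powr_mult:
  assumes "f \<in> O(\<lambda>n. real n powr p)" "g \<in> O(\<lambda>n. real n powr q)"
  shows "(\<lambda>n. f n * g n) \<in> O(\<lambda>n. real n powr (p + q))"
  using landau_o.big.mult[OF assms] by (simp add: powr_add[symmetric])

lemma smallo_bigo_powr_mult:
  assumes "f \<in> o(\<lambda>n. real n powr p)" "g \<in> O(\<lambda>n. real n powr q)"
  shows "(\<lambda>n. f n * g n) \<in> o(\<lambda>n. real n powr (p + q))"
  using landau_o.small_big_mult[OF assms] by (simp add: powr_add[symmetric])

lemma powr_Suc_bigtheta: "(\<lambda>n::nat. real (Suc n) powr p) \<in> \<Theta>(\<lambda>n. real n powr p)"
  by real_asymp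

lemma bigo_powr_Suc:
  assumes "f \<in> O(\<lambda>n. real n powr p)"
  shows "(\<lambda>n. f (Suc n)) \<in> O(\<lambda>n. real n powr p)"
proof -
  have "(\<lambda>n. f (Suc n)) \<in> O(\<lambda>n. real (Suc n) powr p)"
    using landau_o.big.compose[OF assms filterlim_Suc] by simp
  also have "(\<lambda>n. real (Suc n) powr p) \<in> O(\<lambda>n. real n powr p)"
    using powr_Suc_bigtheta by (rule bigthetaD1)
  finally show ?thesis .
qed

lemma smallo_powr_Suc:
  assumes "f \<in> o(\<lambda>n. real n powr p)"
  shows "(\<lambda>n. f (Suc n)) \<in> o(\<lambda>n. real n powr p)"
proof -
  have "(\<lambda>n. f (Suc n)) \<in> o(\<lambda>n. real (Suc n) powr p)"
    using landau_o.small.compose[OF assms filterlim_Suc] by simp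
  also have "(\<lambda>n. real (Suc n) powr p) \<in> O(\<lambda>n. real n powr p)"
    using powr_Suc_bigtheta by (rule bigthetaD1)
  finally show ?thesis .
qed

lemma smallo_powr_tendsto_0:
  assumes "f \<in> o(\<lambda>n. real n powr (-d))" "0 \<le> d"
  shows "f \<longlonglongrightarrow> 0"
proof -
  have "f \<in> o(\<lambda>n. real n powr 0)"
    by (rule smallo_powr_mono[OF assms(1)]) (use assms(2) in simp)
  also have "(\<lambda>n::nat. real n powr 0) \<in> O(\<lambda>_. 1)"
    by real_asymp
  finally show ?thesis
    using smalloD_tendsto by fastforce
qed

lemma bigo_powr_tendsto_0:
  assumes "f \<in> O(\<lambda>n. real n powr (-s))" "0 < s"
  shows "f \<longlonglongrightarrow> 0"
proof -
  have "(\<lambda>n::nat. real n powr (-s)) \<in> o(\<lambda>_. 1)"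
    using assms(2) by real_asymp
  with assms(1) have "f \<in> o(\<lambda>_. 1)"
    by (rule landau_o.big_small_trans)
  then show ?thesis
    using smalloD_tendsto by fastforce
qed

lemma convergent_bigo_1: "f \<longlonglongrightarrow> l \<Longrightarrow> f \<in> O(\<lambda>_. 1)"
  by (rule bigoI_tendsto[where c = l]) auto

lemma eventually_real_pos: "eventually (\<lambda>n::nat. real n > 0) sequentially"
  using eventually_gt_at_top[of 0] by eventually_elim simp

lemma smallo_powr_of_tendsto:
  assumes "(\<lambda>n. real n powr d * f n) \<longlonglongrightarrow> 0"
  shows "f \<in> o(\<lambda>n. real n powr (-d))"
proof (rule smalloI_tendsto)
  show "(\<lambda>n. f n / real n powr (-d)) \<longlonglongrightarrow> 0"
    using assms by (simp add: powr_minus divide_inverse mult.commute)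
  show "eventually (\<lambda>n. real n powr (-d) \<noteq> 0) sequentially"
    using eventually_real_pos by eventually_elim simp
qed

section \<open>Smoothly decaying sequences\<close>

text \<open>The truncation at level \<open>J\<close> is what the inductions for products and reciprocals
  run over: \<open>\<Delta>(1/u)\<close> is expressed through \<open>1/u\<close> itself.\<close>

definition smooth_decay_upto :: "nat \<Rightarrow> (nat \<Rightarrow> real) \<Rightarrow> real \<Rightarrow> bool" where
  "smooth_decay_upto J u s \<longleftrightarrow> (\<forall>i\<le>J. (fdiff ^^ i) u \<in> O(\<lambda>n. real n powr (-(s + real i))))"

definition smooth_decay :: "(nat \<Rightarrow> real) \<Rightarrow> real \<Rightarrow> bool" where
  "smooth_decay u s \<longleftrightarrow> (\<forall>J. smooth_decay_upto J u s)"

lemma smooth_decay_upto_bigo: "smooth_decay_upto J u s \<Longrightarrow> u \<in> O(\<lambda>n. real n powr (-s))"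
  unfolding smooth_decay_upto_def by (metis funpow_0 le0 add_0_right of_nat_0)

lemma smooth_decay_upto_SucD: "smooth_decay_upto (Suc J) u s \<Longrightarrow> smooth_decay_upto J u s"
  by (auto simp: smooth_decay_upto_def)

lemma smooth_decay_upto_SucI:
  assumes "u \<in> O(\<lambda>n. real n powr (-s))" "smooth_decay_upto J (fdiff u) (s + 1)"
  shows "smooth_decay_upto (Suc J) u s"
  unfolding smooth_decay_upto_def
proof safe
  fix i assume "i \<le> Suc J"
  show "(fdiff ^^ i) u \<in> O(\<lambda>n. real n powr (-(s + real i)))"
  proof (cases i)
    case 0
    then show ?thesis using assms(1) by simp
  next
    case (Suc k)
    with \<open>i \<le> Suc J\<close> assms(2) have "(fdiff ^^ k) (fdiff u) \<in> O(\<lambda>n. real n powr (-(s + 1 + real k)))"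
      unfolding smooth_decay_upto_def by blast
    then show ?thesis
      using Suc by (simp only: funpow_fdiff_Suc of_nat_Suc add.assoc add.commute[of 1])
  qed
qed

lemma smooth_decay_upto_fdiff:
  "smooth_decay_upto (Suc J) u s \<Longrightarrow> smooth_decay_upto J (fdiff u) (s + 1)"
  unfolding smooth_decay_upto_def
proof safe
  fix i assume "\<forall>i\<le>Suc J. (fdiff ^^ i) u \<in> O(\<lambda>n. real n powr (-(s + real i)))" "i \<le> J"
  then have "(fdiff ^^ Suc i) u \<in> O(\<lambda>n. real n powr (-(s + real (Suc i))))"
    by blast
  then show "(fdiff ^^ i) (fdiff u) \<in> O(\<lambda>n. real n powr (-(s + 1 + real i)))"
    by (simp only: funpow_fdiff_Suc of_nat_Suc add.assoc add.commute[of 1])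
qed

lemma smooth_decay_upto_add:
  "smooth_decay_upto J u s \<Longrightarrow> smooth_decay_upto J v s \<Longrightarrow> smooth_decay_upto J (\<lambda>n. u n + v n) s"
  unfolding smooth_decay_upto_def funpow_fdiff_add by (auto intro: sum_in_bigo)

lemma smooth_decay_upto_diff:
  "smooth_decay_upto J u s \<Longrightarrow> smooth_decay_upto J v s \<Longrightarrow> smooth_decay_upto J (\<lambda>n. u n - v n) s"
  unfolding smooth_decay_upto_def funpow_fdiff_diff by (auto intro: sum_in_bigo)

lemma smooth_decay_upto_cmult: "smooth_decay_upto J u s \<Longrightarrow> smooth_decay_upto J (\<lambda>n. c * u n) s"
  unfolding smooth_decay_upto_def funpow_fdiff_cmult by auto

lemma smooth_decay_upto_mono: "smooth_decay_upto J u s \<Longrightarrow> t \<le> s \<Longrightarrow> smooth_decay_upto J u t"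
  unfolding smooth_decay_upto_def by (auto elim!: bigo_powr_mono)

lemma smooth_decay_upto_shift: "smooth_decay_upto J u s \<Longrightarrow> smooth_decay_upto J (\<lambda>n. u (Suc n)) s"
  unfolding smooth_decay_upto_def funpow_fdiff_shift by (auto intro: bigo_powr_Suc)

lemma smooth_decay_upto_eventually_cong:
  "smooth_decay_upto J u s \<Longrightarrow> eventually (\<lambda>n. u n = v n) sequentially \<Longrightarrow> smooth_decay_upto J v s"
  unfolding smooth_decay_upto_def
  using funpow_fdiff_eventually_cong landau_o.big.in_cong by blast

lemma smooth_decay_upto_const: "smooth_decay_upto J (\<lambda>n. c) 0"
  unfolding smooth_decay_upto_def
proof safe
  fix i
  have "(\<lambda>_. 1) \<in> O(\<lambda>n::nat. real n powr 0)"
    by real_asymp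
  then have "(\<lambda>_. c) \<in> O(\<lambda>n::nat. real n powr 0)"
    using landau_o.big_trans[OF bigo_const] by blast
  then show "(fdiff ^^ i) (\<lambda>n. c) \<in> O(\<lambda>n. real n powr (-(0 + real i)))"
    by (cases i) (simp_all only: funpow_fdiff_const, auto)
qed

lemma smooth_decay_upto_mult:
  "smooth_decay_upto J u s \<Longrightarrow> smooth_decay_upto J v t \<Longrightarrow> smooth_decay_upto J (\<lambda>n. u n * v n) (s + t)"
proof (induction J arbitrary: u v s t)
  case 0
  then show ?case
    using bigo_powr_mult[OF smooth_decay_upto_bigo[OF 0(1)] smooth_decay_upto_bigo[OF 0(2)]]
    by (simp add: smooth_decay_upto_def)
next
  case (Suc J)
  have "fdiff (\<lambda>n. u n * v n) = (\<lambda>n. fdiff u n * v n + u (Suc n) * fdiff v n)"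
    by (auto simp: fdiff_def algebra_simps)
  moreover have "smooth_decay_upto J (\<lambda>n. fdiff u n * v n) (s + t + 1)"
    using Suc.IH[OF smooth_decay_upto_fdiff[OF Suc.prems(1)] smooth_decay_upto_SucD[OF Suc.prems(2)]]
    by (simp add: add_ac)
  moreover have "smooth_decay_upto J (\<lambda>n. u (Suc n) * fdiff v n) (s + t + 1)"
    using Suc.IH[OF smooth_decay_upto_shift[OF smooth_decay_upto_SucD[OF Suc.prems(1)]]
        smooth_decay_upto_fdiff[OF Suc.prems(2)]]
    by (simp add: add_ac)
  ultimately have "smooth_decay_upto J (fdiff (\<lambda>n. u n * v n)) (s + t + 1)"
    by (simp add: smooth_decay_upto_add)
  moreover have "(\<lambda>n. u n * v n) \<in> O(\<lambda>n. real n powr (-(s + t)))"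
    using bigo_powr_mult[OF smooth_decay_upto_bigo[OF Suc.prems(1)] smooth_decay_upto_bigo[OF Suc.prems(2)]]
    by simp
  ultimately show ?case
    by (intro smooth_decay_upto_SucI)
qed

lemma smooth_decay_upto_inverse:
  assumes "smooth_decay_upto J u 0" "d > 0" "eventually (\<lambda>n. u n \<ge> d) sequentially"
  shows "smooth_decay_upto J (\<lambda>n. 1 / u n) 0"
  using assms(1)
proof (induction J)
  case 0
  have "eventually (\<lambda>n. norm (1 / u n) \<le> (1 / d) * norm (real n powr (-(0 + real 0)))) sequentially"
    using assms(3) eventually_gt_at_top[of 0]
  proof eventually_elim
    case (elim n)
    then show ?case
      using assms(2) by (simp add: abs_of_pos frac_le)
  qed
  then have "(\<lambda>n. 1 / u n) \<in> O(\<lambda>n. real n powr (-(0 + real 0)))"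
    by (rule bigoI)
  then show ?case
    unfolding smooth_decay_upto_def by simp
next
  case (Suc J)
  define w where "w = (\<lambda>n. 1 / u n)"
  have w: "smooth_decay_upto J w 0"
    using Suc.IH[OF smooth_decay_upto_SucD[OF Suc.prems]] by (simp add: w_def)
  have "eventually (\<lambda>n. - (fdiff u n * (w n * w (Suc n))) = fdiff w n) sequentially"
    using assms(3) eventually_sequentially_Suc[THEN iffD2, OF assms(3)]
  proof eventually_elim
    case (elim n)
    then have "u n > 0" "u (Suc n) > 0"
      using assms(2) by linarith+
    then show ?case
      by (simp add: fdiff_def w_def field_simps)
  qed
  moreover have "smooth_decay_upto J (\<lambda>n. - (fdiff u n * (w n * w (Suc n)))) 1"
    using smooth_decay_upto_cmult[OF smooth_decay_upto_mult[OF smooth_decay_upto_fdiff[OF Suc.prems]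
          smooth_decay_upto_mult[OF w smooth_decay_upto_shift[OF w]]], of "-1"]
    by simp
  ultimately have "smooth_decay_upto J (fdiff w) (0 + 1)"
    by (simp add: smooth_decay_upto_eventually_cong)
  then show ?case
    using smooth_decay_upto_bigo[OF w] unfolding w_def by (intro smooth_decay_upto_SucI) simp_all
qed

lemma smooth_decay_bigo: "smooth_decay u s \<Longrightarrow> u \<in> O(\<lambda>n. real n powr (-s))"
  unfolding smooth_decay_def using smooth_decay_upto_bigo by blast

lemma smooth_decay_fdiff: "smooth_decay u s \<Longrightarrow> smooth_decay (fdiff u) (s + 1)"
  unfolding smooth_decay_def using smooth_decay_upto_fdiff by blast

lemma smooth_decay_add: "smooth_decay u s \<Longrightarrow> smooth_decay v s \<Longrightarrow> smooth_decay (\<lambda>n. u n + v n) s"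
  by (auto simp: smooth_decay_def intro: smooth_decay_upto_add)

lemma smooth_decay_diff: "smooth_decay u s \<Longrightarrow> smooth_decay v s \<Longrightarrow> smooth_decay (\<lambda>n. u n - v n) s"
  by (auto simp: smooth_decay_def intro: smooth_decay_upto_diff)

lemma smooth_decay_cmult: "smooth_decay u s \<Longrightarrow> smooth_decay (\<lambda>n. c * u n) s"
  by (auto simp: smooth_decay_def intro: smooth_decay_upto_cmult)

lemma smooth_decay_mono: "smooth_decay u s \<Longrightarrow> t \<le> s \<Longrightarrow> smooth_decay u t"
  by (auto simp: smooth_decay_def intro: smooth_decay_upto_mono)

lemma smooth_decay_shift: "smooth_decay u s \<Longrightarrow> smooth_decay (\<lambda>n. u (Suc n)) s"
  by (auto simp: smooth_decay_def intro: smooth_decay_upto_shift)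

lemma smooth_decay_eventually_cong:
  "smooth_decay u s \<Longrightarrow> eventually (\<lambda>n. u n = v n) sequentially \<Longrightarrow> smooth_decay v s"
  by (auto simp: smooth_decay_def intro: smooth_decay_upto_eventually_cong)

lemma smooth_decay_const: "smooth_decay (\<lambda>n. c) 0"
  by (auto simp: smooth_decay_def intro: smooth_decay_upto_const)

lemma smooth_decay_mult: "smooth_decay u s \<Longrightarrow> smooth_decay v t \<Longrightarrow> smooth_decay (\<lambda>n. u n * v n) (s + t)"
  by (auto simp: smooth_decay_def intro: smooth_decay_upto_mult)

lemma smooth_decay_inverse:
  "smooth_decay u 0 \<Longrightarrow> d > 0 \<Longrightarrow> eventually (\<lambda>n. u n \<ge> d) sequentially \<Longrightarrow> smooth_decay (\<lambda>n. 1 / u n) 0"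
  by (auto simp: smooth_decay_def intro: smooth_decay_upto_inverse)

lemma smooth_decay_tendsto_0: "smooth_decay u s \<Longrightarrow> s > 0 \<Longrightarrow> u \<longlonglongrightarrow> 0"
  using bigo_powr_tendsto_0 smooth_decay_bigo by blast

lemma eventually_const_add_smooth_decay_gt:
  assumes "smooth_decay v e" "e > 0" "c < C"
  shows "eventually (\<lambda>n. c < C + v n) sequentially"
proof -
  have "(\<lambda>n. C + v n) \<longlonglongrightarrow> C + 0"
    using smooth_decay_tendsto_0[OF assms(1,2)] by (intro tendsto_intros)
  then show ?thesis
    using assms(3) by (intro order_tendstoD) auto
qed

lemma smooth_decay_sum:
  "(\<And>i. i \<in> A \<Longrightarrow> smooth_decay (f i) s) \<Longrightarrow> smooth_decay (\<lambda>n. \<Sum>i\<in>A. f i n) s"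
proof (induction A rule: infinite_finite_induct)
  case (infinite A)
  then show ?case
    unfolding smooth_decay_def smooth_decay_upto_def by simp
next
  case empty
  then show ?case
    unfolding smooth_decay_def smooth_decay_upto_def by simp
next
  case (insert x F)
  then show ?case
    using smooth_decay_add[of "f x" s "\<lambda>n. \<Sum>i\<in>F. f i n"] by simp
qed

section \<open>Powers of \<open>n\<close> decay smoothly\<close>

lemma funpow_fdiff_bound_by_derivative:
  fixes F :: "nat \<Rightarrow> real \<Rightarrow> real"
  assumes "\<And>i t. t > 0 \<Longrightarrow> (F i has_real_derivative F (Suc i) t) (at t)"
    and "n \<ge> 1"
    and "\<And>t. real n \<le> t \<Longrightarrow> t \<le> real n + real j \<Longrightarrow> \<bar>F j t\<bar> \<le> M"
  shows "\<bar>(fdiff ^^ j) (\<lambda>k. F 0 (real k)) n\<bar> \<le> M"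
  using assms(1,3)
proof (induction j arbitrary: F)
  case 0
  then show ?case by simp
next
  case (Suc j)
  define G where "G = (\<lambda>i t. F i (t + 1) - F i t)"
  have "(G i has_real_derivative G (Suc i) t) (at t)" if "t > 0" for i t
  proof -
    have "((\<lambda>t. F i (t + 1)) has_real_derivative F (Suc i) (t + 1)) (at t)"
      using Suc.prems(1)[of "t + 1" i] that by (simp add: DERIV_shift)
    then show ?thesis
      unfolding G_def using Suc.prems(1)[OF that] by (intro DERIV_diff)
  qed
  moreover have "\<bar>G j t\<bar> \<le> M" if t: "real n \<le> t" "t \<le> real n + real j" for t
  proof -
    obtain z where "t < z" "z < t + 1" "F j (t + 1) - F j t = (t + 1 - t) * F (Suc j) z"
      using MVT2[of t "t + 1" "F j" "F (Suc j)"] Suc.prems(1) t assms(2) by force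
    moreover have "\<bar>F (Suc j) z\<bar> \<le> M" if "t < z" "z < t + 1"
      using t that by (intro Suc.prems(2)) auto
    ultimately show ?thesis by (simp add: G_def)
  qed
  moreover have "(fdiff ^^ Suc j) (\<lambda>k. F 0 (real k)) = (fdiff ^^ j) (\<lambda>k. G 0 (real k))"
    unfolding funpow_fdiff_Suc by (simp add: fdiff_def G_def add_ac)
  ultimately show ?case
    using Suc.IH[of G] by simp
qed

lemma powr_le_on_interval:
  fixes x t K e :: real
  assumes "1 \<le> x" "x \<le> t" "t \<le> x + K" "0 \<le> K"
  shows "t powr e \<le> (1 + K) powr \<bar>e\<bar> * x powr e"
proof -
  have "K \<le> K * x"
    using mult_left_mono[of 1 x K] assms by auto
  then have ratio: "1 \<le> t / x" "t / x \<le> 1 + K"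
    using assms by (auto simp: field_simps)
  have "(t / x) powr e \<le> (1 + K) powr \<bar>e\<bar>"
  proof (cases "e \<ge> 0")
    case True
    then show ?thesis using ratio by (simp add: powr_mono2)
  next
    case False
    then have "(t / x) powr e \<le> 1"
      using ratio powr_mono[of e 0 "t / x"] assms by simp
    also have "1 \<le> (1 + K) powr \<bar>e\<bar>"
      using assms by (intro ge_one_powr_ge_zero) auto
    finally show ?thesis .
  qed
  moreover have "t powr e = x powr e * (t / x) powr e"
    using powr_mult[of x "t / x" e] assms by simp
  ultimately show ?thesis
    using assms by (simp add: mult.commute mult_left_mono)
qed

lemma smooth_decay_of_derivative_bounds:
  fixes F :: "nat \<Rightarrow> real \<Rightarrow> real"
  assumes der: "\<And>i t. t > 0 \<Longrightarrow> (F i has_real_derivative F (Suc i) t) (at t)"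
    and bound: "\<And>j. \<exists>B. \<forall>t\<ge>1. \<bar>F j t\<bar> \<le> B * t powr (-s - real j)"
  shows "smooth_decay (\<lambda>n. F 0 (real n)) s"
  unfolding smooth_decay_def smooth_decay_upto_def
proof safe
  fix J i
  obtain B where "\<forall>t\<ge>1. \<bar>F i t\<bar> \<le> B * t powr (-s - real i)"
    using bound by blast
  then have B: "\<forall>t\<ge>1. \<bar>F i t\<bar> \<le> \<bar>B\<bar> * t powr (-s - real i)"
    by (meson abs_ge_self dual_order.trans mult_right_mono powr_ge_zero)
  define C where "C = \<bar>B\<bar> * (1 + real i) powr \<bar>-s - real i\<bar>"
  have "eventually (\<lambda>n. norm ((fdiff ^^ i) (\<lambda>n. F 0 (real n)) n)
      \<le> C * norm (real n powr (-(s + real i)))) sequentially"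
    using eventually_ge_at_top[of 1]
  proof eventually_elim
    case (elim n)
    have "\<bar>(fdiff ^^ i) (\<lambda>n. F 0 (real n)) n\<bar> \<le> C * real n powr (-(s + real i))"
    proof (rule funpow_fdiff_bound_by_derivative[where F = F, OF der elim])
      fix t assume t: "real n \<le> t" "t \<le> real n + real i"
      have "\<bar>F i t\<bar> \<le> \<bar>B\<bar> * t powr (-s - real i)"
        using B t elim by auto
      also have "\<dots> \<le> \<bar>B\<bar> * ((1 + real i) powr \<bar>-s - real i\<bar> * real n powr (-s - real i))"
        using powr_le_on_interval[of "real n" t "real i"] elim t by (intro mult_left_mono) auto
      finally show "\<bar>F i t\<bar> \<le> C * real n powr (-(s + real i))"
        by (simp add: C_def algebra_simps)
    qed
    then show ?case by simp
  qed
  then show "(fdiff ^^ i) (\<lambda>n. F 0 (real n)) \<in> O(\<lambda>n. real n powr (-(s + real i)))"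
    by (rule bigoI)
qed

lemma fdiff_minus_derivative_bound:
  fixes F :: "nat \<Rightarrow> real \<Rightarrow> real"
  assumes der: "\<And>i t. t > 0 \<Longrightarrow> (F i has_real_derivative F (Suc i) t) (at t)"
    and "t > 0" and bound: "\<And>y. t \<le> y \<Longrightarrow> y \<le> t + 1 \<Longrightarrow> \<bar>F (Suc (Suc j)) y\<bar> \<le> M"
  shows "\<bar>F j (t + 1) - F j t - F (Suc j) t\<bar> \<le> M"
proof -
  \<comment> \<open>Two mean value steps: the left-hand side is \<open>F (j+1) z - F (j+1) t = (z - t) F (j+2) y\<close>.\<close>
  obtain z where z: "t < z" "z < t + 1" "F j (t + 1) - F j t = (t + 1 - t) * F (Suc j) z"
    using MVT2[of t "t + 1" "F j" "F (Suc j)"] der \<open>t > 0\<close> by force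
  obtain y where y: "t < y" "y < z" "F (Suc j) z - F (Suc j) t = (z - t) * F (Suc (Suc j)) y"
    using MVT2[of t z "F (Suc j)" "F (Suc (Suc j))"] der \<open>t > 0\<close> z(1) by force
  have "\<bar>F j (t + 1) - F j t - F (Suc j) t\<bar> = (z - t) * \<bar>F (Suc (Suc j)) y\<bar>"
    using z y by (simp add: abs_mult)
  also have "\<dots> \<le> \<bar>F (Suc (Suc j)) y\<bar>"
    using z by (simp add: mult_left_le_one_le)
  also have "\<dots> \<le> M"
    using y z by (intro bound) auto
  finally show ?thesis .
qed

lemma smooth_decay_fdiff_minus_derivative:
  fixes F :: "nat \<Rightarrow> real \<Rightarrow> real"
  assumes der: "\<And>i t. t > 0 \<Longrightarrow> (F i has_real_derivative F (Suc i) t) (at t)"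
    and bound: "\<And>j. \<exists>B. \<forall>t\<ge>1. \<bar>F j t\<bar> \<le> B * t powr (-s - real j)"
  shows "smooth_decay (\<lambda>n. fdiff (\<lambda>k. F 0 (real k)) n - F 1 (real n)) (s + 2)"
proof -
  define G where "G = (\<lambda>i t. F i (t + 1) - F i t - F (Suc i) t)"
  have "(G i has_real_derivative G (Suc i) t) (at t)" if "t > 0" for i t
  proof -
    have "((\<lambda>t. F i (t + 1)) has_real_derivative F (Suc i) (t + 1)) (at t)"
      using der[of "t + 1" i] that by (simp add: DERIV_shift)
    then show ?thesis
      unfolding G_def using der[OF that] der[OF that, of "Suc i"] by (intro DERIV_diff)
  qed
  moreover have "\<exists>B. \<forall>t\<ge>1. \<bar>G j t\<bar> \<le> B * t powr (-(s + 2) - real j)" for j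
  proof -
    define e where "e = -s - real (Suc (Suc j))"
    obtain B where "\<forall>t\<ge>1. \<bar>F (Suc (Suc j)) t\<bar> \<le> B * t powr e"
      using bound unfolding e_def by blast
    then have B: "\<forall>t\<ge>1. \<bar>F (Suc (Suc j)) t\<bar> \<le> \<bar>B\<bar> * t powr e"
      by (meson abs_ge_self dual_order.trans mult_right_mono powr_ge_zero)
    have "\<bar>G j t\<bar> \<le> \<bar>B\<bar> * (2 powr \<bar>e\<bar> * t powr e)" if t: "t \<ge> 1" for t
    proof -
      have "\<bar>F (Suc (Suc j)) y\<bar> \<le> \<bar>B\<bar> * (2 powr \<bar>e\<bar> * t powr e)" if y: "t \<le> y" "y \<le> t + 1" for y
      proof -
        have "\<bar>F (Suc (Suc j)) y\<bar> \<le> \<bar>B\<bar> * y powr e"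
          using B t y by simp
        also have "\<dots> \<le> \<bar>B\<bar> * (2 powr \<bar>e\<bar> * t powr e)"
          using powr_le_on_interval[of t y 1 e] t y by (intro mult_left_mono) auto
        finally show ?thesis .
      qed
      then show ?thesis
        unfolding G_def using t by (intro fdiff_minus_derivative_bound[where F = F, OF der]) auto
    qed
    then show ?thesis
      by (intro exI[of _ "\<bar>B\<bar> * 2 powr \<bar>e\<bar>"]) (simp add: e_def algebra_simps)
  qed
  ultimately have "smooth_decay (\<lambda>n. G 0 (real n)) (s + 2)"
    by (rule smooth_decay_of_derivative_bounds)
  then show ?thesis
    by (simp add: G_def fdiff_def add_ac)
qed

definition powr_derivs :: "real \<Rightarrow> nat \<Rightarrow> real \<Rightarrow> real" where
  "powr_derivs s j t = (\<Prod>i<j. (-s - real i)) * t powr (-s - real j)"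

lemma has_real_derivative_powr_derivs:
  "t > 0 \<Longrightarrow> (powr_derivs s j has_real_derivative powr_derivs s (Suc j) t) (at t)"
proof -
  assume "t > 0"
  then have "((\<lambda>t. (\<Prod>i<j. (-s - real i)) * t powr (-s - real j)) has_real_derivative
      (\<Prod>i<j. (-s - real i)) * ((-s - real j) * t powr (-s - real j - 1))) (at t)"
    by (intro DERIV_cmult has_real_derivative_powr)
  then show ?thesis
    unfolding powr_derivs_def by (simp add: algebra_simps)
qed

lemma powr_derivs_bound: "\<exists>B. \<forall>t\<ge>1. \<bar>powr_derivs s j t\<bar> \<le> B * t powr (-s - real j)"
  by (intro exI[of _ "\<bar>\<Prod>i<j. (-s - real i)\<bar>"]) (auto simp: powr_derivs_def abs_mult)

lemma powr_derivs_Suc_bound: "\<exists>B. \<forall>t\<ge>1. \<bar>powr_derivs s (Suc j) t\<bar> \<le> B * t powr (-(s + 1) - real j)"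
proof -
  have "-(s + 1) - real j = -s - real (Suc j)"
    by simp
  then show ?thesis
    using powr_derivs_bound[of s "Suc j"] by presburger
qed

lemma smooth_decay_powr: "smooth_decay (\<lambda>n. real n powr (-s)) s"
  using smooth_decay_of_derivative_bounds[of "powr_derivs s" s,
      OF has_real_derivative_powr_derivs powr_derivs_bound]
  by (simp add: powr_derivs_def)

lemma smooth_decay_powr': "smooth_decay (\<lambda>n. real n powr a) (-a)"
  using smooth_decay_powr[of "-a"] by simp

lemma fdiff_powr_expansion:
  "smooth_decay (\<lambda>n. fdiff (\<lambda>k. real k powr (-s)) n + s * real n powr (-s - 1)) (s + 2)"
  using smooth_decay_fdiff_minus_derivative[of "powr_derivs s" s,
      OF has_real_derivative_powr_derivs powr_derivs_bound]
  by (simp add: powr_derivs_def)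

lemma fdiff2_powr_expansion:
  "smooth_decay (\<lambda>n. fdiff (fdiff (\<lambda>k. real k powr (-s))) n - s * (s + 1) * real n powr (-s - 2)) (s + 3)"
proof -
  define R1 where "R1 = (\<lambda>n. fdiff (\<lambda>k. real k powr (-s)) n + s * real n powr (-s - 1))"
  define R2 where "R2 = (\<lambda>n. fdiff (\<lambda>k. powr_derivs s 1 (real k)) n - powr_derivs s 2 (real n))"
  have "smooth_decay (fdiff R1) (s + 3)"
    using smooth_decay_fdiff[OF fdiff_powr_expansion[of s]] unfolding R1_def by (simp add: add_ac)
  moreover have "smooth_decay R2 (s + 1 + 2)"
    using smooth_decay_fdiff_minus_derivative[of "\<lambda>j. powr_derivs s (Suc j)" "s + 1",
        OF has_real_derivative_powr_derivs powr_derivs_Suc_bound]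
    by (simp add: R2_def numeral_2_eq_2)
  moreover have "fdiff (fdiff (\<lambda>k. real k powr (-s))) n - s * (s + 1) * real n powr (-s - 2)
      = fdiff R1 n + R2 n" for n
    by (simp add: R1_def R2_def fdiff_def powr_derivs_def numeral_2_eq_2 algebra_simps)
  ultimately show ?thesis
    by (simp add: smooth_decay_add add.assoc)
qed

section \<open>The ratio \<open>\<R>\<^sup>2\<close> of smooth sequences\<close>

definition Rop :: "(nat \<Rightarrow> real) \<Rightarrow> nat \<Rightarrow> real" where
  "Rop u n = u n * u (n + 2) / (u (n + 1))\<^sup>2"

lemma Rop_mult: "Rop (\<lambda>n. f n * w n) n = Rop f n * Rop w n"
  by (simp add: Rop_def power_mult_distrib)

lemma Rop_eventually_cong:
  assumes "eventually (\<lambda>n. u n = w n) sequentially"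
  shows "eventually (\<lambda>n. Rop u n = Rop w n) sequentially"
proof -
  from assms obtain N where "\<forall>n\<ge>N. u n = w n"
    by (auto simp: eventually_sequentially)
  then show ?thesis
    by (auto simp: eventually_sequentially Rop_def intro!: exI[of _ N])
qed

lemma powr_in_terms_of_powr_neg:
  fixes x g :: real
  assumes "x > 0"
  shows "x powr (-g - 1) = x powr (-g) / x" "x powr (-g - 2) = x powr (-g) / x\<^sup>2"
    "x powr (2 * g + 2) = x\<^sup>2 / (x powr (-g))\<^sup>2" "x powr (-(2 * g)) = (x powr (-g))\<^sup>2"
    "x powr (2 * g) = 1 / (x powr (-g))\<^sup>2"
proof -
  show "x powr (-g - 1) = x powr (-g) / x" "x powr (-g - 2) = x powr (-g) / x\<^sup>2"
    using assms by (simp_all add: powr_diff)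
  have sq: "(x powr (-g))\<^sup>2 = x powr (-(2 * g))"
    using assms by (simp add: power2_eq_square powr_add[symmetric])
  then show "x powr (-(2 * g)) = (x powr (-g))\<^sup>2"
    by simp
  show "x powr (2 * g + 2) = x\<^sup>2 / (x powr (-g))\<^sup>2" "x powr (2 * g) = 1 / (x powr (-g))\<^sup>2"
    unfolding sq using assms by (simp_all add: powr_add powr_minus field_simps)
qed

text \<open>For \<open>f = n^(-g)\<close> the expansions \<open>\<Delta>f = -g n^(-g-1) + \<dots>\<close> and
  \<open>\<Delta>\<^sup>2f = g (g+1) n^(-g-2) + \<dots>\<close> give \<open>f \<Delta>\<^sup>2f - (\<Delta>f)\<^sup>2 = g n^(-2g-2) + \<dots>\<close>.\<close>

lemma powr_fdiff_discriminant_expansion: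
  fixes g :: real
  defines "f \<equiv> \<lambda>k. real k powr (-g)"
  shows "smooth_decay (\<lambda>n. real n powr (2 * g + 2) * (f n * fdiff (fdiff f) n - (fdiff f n)\<^sup>2) - g) 1"
proof -
  define G1 where "G1 = (\<lambda>n. fdiff f n + g * real n powr (-g - 1))"
  define G2 where "G2 = (\<lambda>n. fdiff (fdiff f) n - g * (g + 1) * real n powr (-g - 2))"
  have G1: "smooth_decay G1 (g + 2)"
    using fdiff_powr_expansion[of g] by (simp add: G1_def f_def)
  have G2: "smooth_decay G2 (g + 3)"
    using fdiff2_powr_expansion[of g] by (simp add: G2_def f_def)
  have a1: "smooth_decay (\<lambda>n. f n * G2 n) (g + (g + 3))"
    unfolding f_def by (intro smooth_decay_mult smooth_decay_powr G2)
  have a2: "smooth_decay (\<lambda>n. (2 * g) * (real n powr (-(g + 1)) * G1 n)) (g + (g + 3))"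
    using smooth_decay_cmult[OF smooth_decay_mult[OF smooth_decay_powr[of "g + 1"] G1]]
    by (simp add: add_ac)
  have a3: "smooth_decay (\<lambda>n. G1 n * G1 n) (g + (g + 3))"
    using smooth_decay_mono[OF smooth_decay_mult[OF G1 G1], of "g + (g + 3)"] by simp
  have "smooth_decay (\<lambda>n. real n powr (2 * g + 2) *
      ((f n * G2 n + (2 * g) * (real n powr (-(g + 1)) * G1 n)) - G1 n * G1 n)) (-(2 * g + 2) + (g + (g + 3)))"
    using smooth_decay_mult[OF smooth_decay_powr'[of "2 * g + 2"] smooth_decay_diff[OF smooth_decay_add[OF a1 a2] a3]] .
  then have "smooth_decay (\<lambda>n. real n powr (2 * g + 2) *
      ((f n * G2 n + (2 * g) * (real n powr (-g - 1) * G1 n)) - G1 n * G1 n)) 1"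
    by simp
  moreover have "eventually (\<lambda>n. real n powr (2 * g + 2) *
      ((f n * G2 n + (2 * g) * (real n powr (-g - 1) * G1 n)) - G1 n * G1 n) =
      real n powr (2 * g + 2) * (f n * fdiff (fdiff f) n - (fdiff f n)\<^sup>2) - g) sequentially"
    using eventually_real_pos
  proof eventually_elim
    case (elim n)
    have "f n > 0" "real n powr (-g) = f n"
      using elim by (simp_all add: f_def)
    then show ?case
      unfolding G1_def G2_def powr_in_terms_of_powr_neg[OF elim, of g]
      using elim by (simp add: field_simps power2_eq_square)
  qed
  ultimately show ?thesis
    by (rule smooth_decay_eventually_cong)
qed

lemma Rop_powr_expansion: "smooth_decay (\<lambda>n. real n ^ 2 * (Rop (\<lambda>k. real k powr (-g)) n - 1) - g) 1"
proof -
  define f where "f = (\<lambda>k. real k powr (-g))"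
  define A where "A = (\<lambda>n. real n powr (2 * g + 2) * (f n * fdiff (fdiff f) n - (fdiff f n)\<^sup>2) - g)"
  define B where "B = (\<lambda>n. real n powr (-(2 * g)) * fdiff (\<lambda>k. real k powr (2 * g)) n)"
  have A: "smooth_decay A 1"
    unfolding A_def f_def by (rule powr_fdiff_discriminant_expansion)
  have B: "smooth_decay B 1"
    unfolding B_def
    using smooth_decay_mult[OF smooth_decay_powr[of "2 * g"] smooth_decay_fdiff[OF smooth_decay_powr'[of "2 * g"]]]
    by simp
  \<comment> \<open>\<open>n^2 (Rop f n - 1) = (A n + g) (B n + 1)\<close>, where \<open>B n + 1 = f(n)^2 / f(n+1)^2\<close>.\<close>
  have "smooth_decay (\<lambda>n. A n + g * B n + A n * B n) 1"
    using smooth_decay_add[OF smooth_decay_add[OF A smooth_decay_cmult[OF B]]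
        smooth_decay_mono[OF smooth_decay_mult[OF A B]]]
    by simp
  moreover have "eventually (\<lambda>n. A n + g * B n + A n * B n = real n ^ 2 * (Rop f n - 1) - g) sequentially"
    using eventually_real_pos
  proof eventually_elim
    case (elim n)
    have pos: "f n > 0" "f (Suc n) > 0" "f (Suc (Suc n)) > 0"
      using elim by (simp_all add: f_def)
    have fn: "real n powr (-g) = f n" "real (Suc n) powr (-g) = f (Suc n)"
      by (simp_all add: f_def)
    have "real (Suc n) > 0"
      by simp
    have "A n + g * B n + A n * B n = (A n + g) * (B n + 1) - g"
      by (simp add: algebra_simps)
    also have "B n + 1 = (f n)\<^sup>2 / (f (Suc n))\<^sup>2"
      unfolding B_def fdiff_def powr_in_terms_of_powr_neg[OF elim, of g] fn
        powr_in_terms_of_powr_neg[OF \<open>real (Suc n) > 0\<close>, of g]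
      using pos elim by (simp add: field_simps)
    also have "A n + g = real n ^ 2 / (f n)\<^sup>2 * (f n * f (Suc (Suc n)) - (f (Suc n))\<^sup>2)"
      unfolding A_def fdiff_def powr_in_terms_of_powr_neg[OF elim, of g] fn
      using pos elim by (simp add: field_simps power2_eq_square)
    also have "real n ^ 2 / (f n)\<^sup>2 * (f n * f (Suc (Suc n)) - (f (Suc n))\<^sup>2) * ((f n)\<^sup>2 / (f (Suc n))\<^sup>2) - g
        = real n ^ 2 * (Rop f n - 1) - g"
      unfolding Rop_def using pos by (simp add: field_simps)
    finally show ?case .
  qed
  ultimately show ?thesis
    unfolding f_def by (rule smooth_decay_eventually_cong)
qed

lemma smooth_decay_Rop_const_add:
  assumes v: "smooth_decay v e" and "e > 0" "C > 0"
  shows "smooth_decay (\<lambda>n. Rop (\<lambda>k. C + v k) n - 1) (e + 2)"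
proof -
  define w where "w = (\<lambda>k. C + v k)"
  have w: "smooth_decay w 0"
    unfolding w_def using \<open>e > 0\<close>
    by (intro smooth_decay_add smooth_decay_const smooth_decay_mono[OF v]) auto
  have "eventually (\<lambda>n. C / 2 < w n) sequentially"
    unfolding w_def using eventually_const_add_smooth_decay_gt[OF v \<open>e > 0\<close>, of "C / 2" C] \<open>C > 0\<close>
    by simp
  then have "eventually (\<lambda>n. C / 2 < w (Suc n)) sequentially"
    by (rule eventually_sequentially_Suc[THEN iffD2])
  then have w_ge: "eventually (\<lambda>n. C / 2 \<le> w (Suc n)) sequentially"
    by eventually_elim simp
  have "smooth_decay (\<lambda>n. 1 / w (Suc n)) 0"
    using smooth_decay_inverse[OF smooth_decay_shift[OF w] _ w_ge] \<open>C > 0\<close> by simp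
  moreover have "smooth_decay (\<lambda>n. w n * fdiff (fdiff v) n - fdiff v n * fdiff v n) (e + 2)"
  proof (rule smooth_decay_diff)
    show "smooth_decay (\<lambda>n. w n * fdiff (fdiff v) n) (e + 2)"
      using smooth_decay_mult[OF w smooth_decay_fdiff[OF smooth_decay_fdiff[OF v]]] by (simp add: add.commute)
    show "smooth_decay (\<lambda>n. fdiff v n * fdiff v n) (e + 2)"
      using smooth_decay_mono[OF smooth_decay_mult[OF smooth_decay_fdiff[OF v] smooth_decay_fdiff[OF v]]]
        \<open>e > 0\<close> by simp
  qed
  ultimately have "smooth_decay (\<lambda>n. (w n * fdiff (fdiff v) n - fdiff v n * fdiff v n) *
      (1 / w (Suc n) * (1 / w (Suc n)))) (e + 2 + (0 + 0))"
    by (intro smooth_decay_mult)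
  moreover have "eventually (\<lambda>n. (w n * fdiff (fdiff v) n - fdiff v n * fdiff v n) *
      (1 / w (Suc n) * (1 / w (Suc n))) = Rop (\<lambda>k. C + v k) n - 1) sequentially"
    using w_ge
  proof eventually_elim
    case (elim n)
    then have "w (Suc n) > 0"
      using \<open>C > 0\<close> by linarith
    \<comment> \<open>\<open>\<Delta>w = \<Delta>v\<close>, so the numerator of \<open>Rop w n - 1\<close> only involves differences of \<open>v\<close>.\<close>
    moreover have "w n * fdiff (fdiff v) n - fdiff v n * fdiff v n = w n * w (Suc (Suc n)) - (w (Suc n))\<^sup>2"
      by (simp add: w_def fdiff_def algebra_simps power2_eq_square)
    ultimately show ?case
      unfolding Rop_def w_def[symmetric] by (simp add: field_simps power2_eq_square)
  qed
  ultimately show ?thesis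
    by (simp add: smooth_decay_eventually_cong)
qed

section \<open>Smooth expansions with positive leading coefficient\<close>

definition smooth_expansion :: "(nat \<Rightarrow> real) \<Rightarrow> real \<Rightarrow> bool" where
  "smooth_expansion u g \<longleftrightarrow> (\<exists>C v e. C > 0 \<and> e > 0 \<and> smooth_decay v e \<and>
     eventually (\<lambda>n. u n = real n powr (-g) * (C + v n)) sequentially)"

lemma smooth_expansionI:
  "C > 0 \<Longrightarrow> e > 0 \<Longrightarrow> smooth_decay v e \<Longrightarrow>
    eventually (\<lambda>n. u n = real n powr (-g) * (C + v n)) sequentially \<Longrightarrow> smooth_expansion u g"
  unfolding smooth_expansion_def by blast

lemma smooth_expansionE:
  assumes "smooth_expansion u g"
  obtains C v e where "C > 0" "e > 0" "smooth_decay v e"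
    "eventually (\<lambda>n. u n = real n powr (-g) * (C + v n)) sequentially"
  using assms unfolding smooth_expansion_def by blast

lemma smooth_expansion_const: "c > 0 \<Longrightarrow> smooth_expansion (\<lambda>_. c) 0"
  by (rule smooth_expansionI[of c 1 "\<lambda>_. 0"])
    (auto intro: eventually_mono[OF eventually_gt_at_top[of 0]]
      simp: smooth_decay_def smooth_decay_upto_def)

lemma smooth_expansion_cmult:
  assumes "smooth_expansion u g" "c > 0"
  shows "smooth_expansion (\<lambda>n. c * u n) g"
proof -
  obtain C v e where "C > 0" "e > 0" "smooth_decay v e"
    and u: "eventually (\<lambda>n. u n = real n powr (-g) * (C + v n)) sequentially"
    using assms(1) by (rule smooth_expansionE)
  have "eventually (\<lambda>n. c * u n = real n powr (-g) * (c * C + c * v n)) sequentially"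
    using u by eventually_elim (simp add: algebra_simps)
  then show ?thesis
    using \<open>C > 0\<close> \<open>e > 0\<close> \<open>smooth_decay v e\<close> assms(2)
    by (intro smooth_expansionI[of "c * C" e "\<lambda>n. c * v n"] smooth_decay_cmult) auto
qed

lemma smooth_expansion_mult:
  assumes "smooth_expansion u1 g1" "smooth_expansion u2 g2"
  shows "smooth_expansion (\<lambda>n. u1 n * u2 n) (g1 + g2)"
proof -
  obtain C1 v1 e1 where "C1 > 0" "e1 > 0" and v1: "smooth_decay v1 e1"
    and u1: "eventually (\<lambda>n. u1 n = real n powr (-g1) * (C1 + v1 n)) sequentially"
    using assms(1) by (rule smooth_expansionE)
  obtain C2 v2 e2 where "C2 > 0" "e2 > 0" and v2: "smooth_decay v2 e2"
    and u2: "eventually (\<lambda>n. u2 n = real n powr (-g2) * (C2 + v2 n)) sequentially"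
    using assms(2) by (rule smooth_expansionE)
  define e where "e = min e1 e2"
  have "smooth_decay (\<lambda>n. C1 * v2 n + C2 * v1 n + v1 n * v2 n) e"
    using \<open>e1 > 0\<close> \<open>e2 > 0\<close> unfolding e_def
    by (intro smooth_decay_add smooth_decay_cmult smooth_decay_mono[OF v1] smooth_decay_mono[OF v2]
        smooth_decay_mono[OF smooth_decay_mult[OF v1 v2]]) auto
  moreover have "eventually (\<lambda>n. u1 n * u2 n =
      real n powr (-(g1 + g2)) * (C1 * C2 + (C1 * v2 n + C2 * v1 n + v1 n * v2 n))) sequentially"
    using u1 u2
  proof eventually_elim
    case (elim n)
    have "u1 n * u2 n = (real n powr (-g1) * real n powr (-g2)) *
        (C1 * C2 + (C1 * v2 n + C2 * v1 n + v1 n * v2 n))"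
      using elim by (simp add: algebra_simps)
    also have "real n powr (-g1) * real n powr (-g2) = real n powr (-(g1 + g2))"
      by (metis minus_add_distrib powr_add)
    finally show ?case .
  qed
  ultimately show ?thesis
    using \<open>C1 > 0\<close> \<open>C2 > 0\<close> \<open>e1 > 0\<close> \<open>e2 > 0\<close> unfolding e_def
    by (intro smooth_expansionI) auto
qed

lemma smooth_expansion_add_le:
  assumes "smooth_expansion u1 g1" "smooth_expansion u2 g2" "g1 \<le> g2"
  shows "smooth_expansion (\<lambda>n. u1 n + u2 n) g1"
proof -
  obtain C1 v1 e1 where "C1 > 0" "e1 > 0" and v1: "smooth_decay v1 e1"
    and u1: "eventually (\<lambda>n. u1 n = real n powr (-g1) * (C1 + v1 n)) sequentially"
    using assms(1) by (rule smooth_expansionE)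
  obtain C2 v2 e2 where "C2 > 0" "e2 > 0" and v2: "smooth_decay v2 e2"
    and u2: "eventually (\<lambda>n. u2 n = real n powr (-g2) * (C2 + v2 n)) sequentially"
    using assms(2) by (rule smooth_expansionE)
  show ?thesis
  proof (cases "g1 = g2")
    case True
    have "smooth_decay (\<lambda>n. v1 n + v2 n) (min e1 e2)"
      by (intro smooth_decay_add smooth_decay_mono[OF v1] smooth_decay_mono[OF v2]) auto
    moreover have "eventually (\<lambda>n. u1 n + u2 n = real n powr (-g1) * ((C1 + C2) + (v1 n + v2 n))) sequentially"
      using u1 u2 by eventually_elim (use True in \<open>simp add: algebra_simps\<close>)
    ultimately show ?thesis
      using \<open>C1 > 0\<close> \<open>C2 > 0\<close> \<open>e1 > 0\<close> \<open>e2 > 0\<close> by (intro smooth_expansionI) auto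
  next
    case False
    with assms(3) have "g1 < g2" by simp
    \<comment> \<open>The faster decaying summand is absorbed into the remainder as \<open>n^(g1-g2) (C2 + v2 n)\<close>.\<close>
    have "smooth_decay (\<lambda>n. real n powr (g1 - g2) * (C2 + v2 n)) (g2 - g1 + 0)"
      using \<open>e2 > 0\<close>
      by (intro smooth_decay_mult smooth_decay_add smooth_decay_const smooth_decay_mono[OF v2])
        (auto intro: smooth_decay_mono[OF smooth_decay_powr'])
    then have "smooth_decay (\<lambda>n. v1 n + real n powr (g1 - g2) * (C2 + v2 n)) (min e1 (g2 - g1))"
      by (intro smooth_decay_add smooth_decay_mono[OF v1]) (auto elim: smooth_decay_mono)
    moreover have "eventually (\<lambda>n. u1 n + u2 n =
        real n powr (-g1) * (C1 + (v1 n + real n powr (g1 - g2) * (C2 + v2 n)))) sequentially"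
      using u1 u2 by eventually_elim (simp add: algebra_simps flip: powr_add)
    ultimately show ?thesis
      using \<open>C1 > 0\<close> \<open>e1 > 0\<close> \<open>g1 < g2\<close> by (intro smooth_expansionI) auto
  qed
qed

lemma smooth_expansion_add:
  assumes "smooth_expansion u1 g1" "smooth_expansion u2 g2"
  shows "smooth_expansion (\<lambda>n. u1 n + u2 n) (min g1 g2)"
proof (cases "g1 \<le> g2")
  case True
  then show ?thesis
    using smooth_expansion_add_le[OF assms] by simp
next
  case False
  then show ?thesis
    using smooth_expansion_add_le[OF assms(2,1)] by (simp add: add.commute)
qed

lemma smooth_expansion_shift:
  assumes "smooth_expansion u g"
  shows "smooth_expansion (\<lambda>n. u (Suc n)) g"
proof -
  obtain C v e where "C > 0" "e > 0" and v: "smooth_decay v e"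
    and u: "eventually (\<lambda>n. u n = real n powr (-g) * (C + v n)) sequentially"
    using assms by (rule smooth_expansionE)
  define q where "q = (\<lambda>n. real n powr g * fdiff (\<lambda>k. real k powr (-g)) n)"
  have q: "smooth_decay q 1"
    unfolding q_def
    using smooth_decay_mult[OF smooth_decay_powr'[of g] smooth_decay_fdiff[OF smooth_decay_powr[of g]]]
    by simp
  have "smooth_decay (\<lambda>n. C * q n + v (Suc n) + q n * v (Suc n)) (min 1 e)"
    using \<open>e > 0\<close>
    by (intro smooth_decay_add smooth_decay_cmult smooth_decay_mono[OF q]
        smooth_decay_mono[OF smooth_decay_shift[OF v]]
        smooth_decay_mono[OF smooth_decay_mult[OF q smooth_decay_shift[OF v]]]) auto
  moreover have "eventually (\<lambda>n. u (Suc n) =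
      real n powr (-g) * (C + (C * q n + v (Suc n) + q n * v (Suc n)))) sequentially"
    using eventually_sequentially_Suc[THEN iffD2, OF u] eventually_real_pos
  proof eventually_elim
    case (elim n)
    have "real n powr (-g) * (1 + q n) = real (Suc n) powr (-g)"
      using elim(2) by (simp add: q_def fdiff_def algebra_simps powr_minus)
    with elim(1) have "u (Suc n) = real n powr (-g) * (1 + q n) * (C + v (Suc n))"
      by simp
    then show ?case
      by (simp add: algebra_simps)
  qed
  ultimately show ?thesis
    using \<open>C > 0\<close> \<open>e > 0\<close> by (intro smooth_expansionI) auto
qed

lemma smooth_expansion_eventually_pos:
  assumes "smooth_expansion u g"
  shows "eventually (\<lambda>n. u n > 0) sequentially"
proof -
  obtain C v e where "C > 0" "e > 0" and v: "smooth_decay v e"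
    and u: "eventually (\<lambda>n. u n = real n powr (-g) * (C + v n)) sequentially"
    using assms by (rule smooth_expansionE)
  have "eventually (\<lambda>n. 0 < C + v n) sequentially"
    using eventually_const_add_smooth_decay_gt[OF v \<open>e > 0\<close> \<open>C > 0\<close>] .
  with u eventually_real_pos show ?thesis
    by eventually_elim simp
qed

lemma smooth_expansion_tendsto_0:
  assumes "smooth_expansion u g" "g > 0"
  shows "u \<longlonglongrightarrow> 0"
proof -
  obtain C v e where "e > 0" and v: "smooth_decay v e"
    and u: "eventually (\<lambda>n. u n = real n powr (-g) * (C + v n)) sequentially"
    using assms(1) by (rule smooth_expansionE)
  have "(\<lambda>n. real n powr (-g) * (C + v n)) \<longlonglongrightarrow> 0 * (C + 0)"
    using smooth_decay_tendsto_0[OF v \<open>e > 0\<close>] assms(2)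
    by (intro tendsto_intros tendsto_neg_powr filterlim_real_sequentially) auto
  then show ?thesis
    using u by (simp add: tendsto_cong)
qed

lemma smooth_expansion_inverse_bigo:
  assumes "smooth_expansion u g"
  shows "(\<lambda>n. 1 / u n) \<in> O(\<lambda>n. real n powr g)"
proof -
  obtain C v e where "C > 0" "e > 0" and v: "smooth_decay v e"
    and u: "eventually (\<lambda>n. u n = real n powr (-g) * (C + v n)) sequentially"
    using assms by (rule smooth_expansionE)
  have "(\<lambda>n. 1 / (C + v n)) \<longlonglongrightarrow> 1 / (C + 0)"
    using smooth_decay_tendsto_0[OF v \<open>e > 0\<close>] \<open>C > 0\<close> by (intro tendsto_intros) auto
  then have "(\<lambda>n. real n powr g * (1 / (C + v n))) \<in> O(\<lambda>n. real n powr g)"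
    by (intro landau_o.big_1_mult[OF landau_o.big_refl] convergent_bigo_1)
  moreover have "eventually (\<lambda>n. real n powr g * (1 / (C + v n)) = 1 / u n) sequentially"
    using u by eventually_elim (simp add: powr_minus divide_inverse mult.commute)
  ultimately show ?thesis
    by (simp add: landau_o.big.in_cong)
qed

lemma smooth_expansion_Rop_minus_1:
  assumes "smooth_expansion h g" "g > 0"
  shows "smooth_expansion (\<lambda>n. Rop h n - 1) 2"
proof -
  obtain C v e where "C > 0" "e > 0" and v: "smooth_decay v e"
    and h: "eventually (\<lambda>n. h n = real n powr (-g) * (C + v n)) sequentially"
    using assms(1) by (rule smooth_expansionE)
  define f where "f = (\<lambda>k. real k powr (-g))"
  define U where "U = (\<lambda>n. real n ^ 2 * (Rop f n - 1) - g)"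
  define W where "W = (\<lambda>n. Rop (\<lambda>k. C + v k) n - 1)"
  have U: "smooth_decay U 1"
    unfolding U_def f_def by (rule Rop_powr_expansion)
  have Rf: "eventually (\<lambda>n. 1 + real n powr (-2) * (g + U n) = Rop f n) sequentially"
    using eventually_real_pos by eventually_elim (simp add: U_def powr_minus field_simps)
  have "smooth_decay (\<lambda>n. 1 + real n powr (-2) * (g + U n)) 0"
    using smooth_decay_add[OF smooth_decay_const smooth_decay_mono[OF smooth_decay_mult[OF
          smooth_decay_powr[of 2] smooth_decay_add[OF smooth_decay_const smooth_decay_mono[OF U]]]]]
    by simp
  then have "smooth_decay (Rop f) 0"
    using Rf by (rule smooth_decay_eventually_cong)
  then have "smooth_decay (\<lambda>n. real n powr 2 * (Rop f n * W n)) (-2 + (0 + (e + 2)))"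
    unfolding W_def using smooth_decay_Rop_const_add[OF v \<open>e > 0\<close> \<open>C > 0\<close>]
    by (intro smooth_decay_mult smooth_decay_powr')
  then have "smooth_decay (\<lambda>n. U n + real n powr 2 * (Rop f n * W n)) (min 1 e)"
    by (intro smooth_decay_add smooth_decay_mono[OF U]) (auto elim: smooth_decay_mono)
  moreover have "eventually (\<lambda>n. Rop h n - 1 =
      real n powr (-2) * (g + (U n + real n powr 2 * (Rop f n * W n)))) sequentially"
    using Rop_eventually_cong[OF h] eventually_real_pos
  proof eventually_elim
    case (elim n)
    then have "Rop h n = Rop f n * Rop (\<lambda>k. C + v k) n"
      by (simp add: f_def Rop_mult)
    then show ?case
      using elim(2) by (simp add: U_def W_def powr_minus field_simps)
  qed
  ultimately show ?thesis
    using assms(2) \<open>e > 0\<close> by (intro smooth_expansionI) auto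
qed

text \<open>The new leading exponent is \<open>min g 2\<close>: \<open>2 h(n+1)\<close> contributes order \<open>g\<close> and
  \<open>Rop h n - 1\<close> contributes order \<open>2\<close>; both leading coefficients are positive, so they
  cannot cancel.\<close>

lemma smooth_expansion_next_level:
  assumes "smooth_expansion h g" "g > 0"
  shows "smooth_expansion (\<lambda>n. (1 + h (Suc n))\<^sup>2 * Rop h n - 1) (min g 2)"
proof -
  have h': "smooth_expansion (\<lambda>n. h (Suc n)) g"
    using assms(1) by (rule smooth_expansion_shift)
  have "smooth_expansion (\<lambda>n. 2 * h (Suc n) + h (Suc n) * h (Suc n)) (min g (g + g))"
    by (intro smooth_expansion_add smooth_expansion_cmult smooth_expansion_mult h') simp
  then have A: "smooth_expansion (\<lambda>n. 2 * h (Suc n) + h (Suc n) * h (Suc n)) g"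
    using assms(2) by simp
  have "smooth_expansion (\<lambda>n. 1 + h (Suc n)) (min 0 g)"
    using smooth_expansion_add[OF smooth_expansion_const h'] by simp
  then have "smooth_expansion (\<lambda>n. 1 + h (Suc n)) 0"
    using assms(2) by simp
  then have "smooth_expansion (\<lambda>n. (1 + h (Suc n)) * (1 + h (Suc n)) * (Rop h n - 1)) (0 + 0 + 2)"
    using smooth_expansion_Rop_minus_1[OF assms] by (intro smooth_expansion_mult)
  with A have "smooth_expansion (\<lambda>n. (2 * h (Suc n) + h (Suc n) * h (Suc n)) +
      (1 + h (Suc n)) * (1 + h (Suc n)) * (Rop h n - 1)) (min g 2)"
    using smooth_expansion_add by fastforce
  moreover have "(\<lambda>n. (2 * h (Suc n) + h (Suc n) * h (Suc n)) + (1 + h (Suc n)) * (1 + h (Suc n)) * (Rop h n - 1))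
      = (\<lambda>n. (1 + h (Suc n))\<^sup>2 * Rop h n - 1)"
    by (simp add: fun_eq_iff algebra_simps power2_eq_square)
  ultimately show ?thesis
    by simp
qed

section \<open>One application of \<open>\<L>\<close>\<close>

lemma Rop_one_plus_smallo:
  assumes eps: "eps \<in> o(\<lambda>n. real n powr (-d))" and "0 \<le> d"
  shows "(\<lambda>n. Rop (\<lambda>k. 1 + eps k) n - 1) \<in> o(\<lambda>n. real n powr (-d))"
proof -
  have eps0: "eps \<longlonglongrightarrow> 0"
    using smallo_powr_tendsto_0[OF eps \<open>0 \<le> d\<close>] .
  have eps1: "(\<lambda>n. eps (Suc n)) \<in> o(\<lambda>n. real n powr (-d))"
    and eps2: "(\<lambda>n. eps (Suc (Suc n))) \<in> o(\<lambda>n. real n powr (-d))"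
    using smallo_powr_Suc[OF eps] smallo_powr_Suc[OF smallo_powr_Suc[OF eps]] by simp_all
  have "(\<lambda>n. eps n * eps (Suc (Suc n))) \<in> o(\<lambda>n. real n powr (-d))"
    using landau_o.small_1_mult[OF eps convergent_bigo_1[OF LIMSEQ_Suc[OF LIMSEQ_Suc[OF eps0]]]] .
  moreover have "(\<lambda>n. eps (Suc n) * eps (Suc n)) \<in> o(\<lambda>n. real n powr (-d))"
    using landau_o.small_1_mult[OF eps1 convergent_bigo_1[OF LIMSEQ_Suc[OF eps0]]] .
  moreover have "(\<lambda>n. 2 * eps (Suc n)) \<in> o(\<lambda>n. real n powr (-d))"
    using eps1 by simp
  ultimately have "(\<lambda>n. eps n + eps (Suc (Suc n)) + eps n * eps (Suc (Suc n)) - 2 * eps (Suc n)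
      - eps (Suc n) * eps (Suc n)) \<in> o(\<lambda>n. real n powr (-d))"
    using eps eps2 by (intro sum_in_smallo)
  moreover have "(\<lambda>n. 1 / (1 + eps (Suc n))\<^sup>2) \<in> O(\<lambda>_. 1)"
    by (rule convergent_bigo_1[where l = "1 / (1 + 0)\<^sup>2"]) (intro tendsto_intros LIMSEQ_Suc[OF eps0]; simp)
  ultimately have "(\<lambda>n. (eps n + eps (Suc (Suc n)) + eps n * eps (Suc (Suc n)) - 2 * eps (Suc n)
      - eps (Suc n) * eps (Suc n)) * (1 / (1 + eps (Suc n))\<^sup>2)) \<in> o(\<lambda>n. real n powr (-d))"
    by (rule landau_o.small_1_mult)
  moreover have "eventually (\<lambda>n. -1 < eps (Suc n)) sequentially"
    using LIMSEQ_Suc[OF eps0] by (rule order_tendstoD) simp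
  then have "eventually (\<lambda>n. (eps n + eps (Suc (Suc n)) + eps n * eps (Suc (Suc n)) - 2 * eps (Suc n)
      - eps (Suc n) * eps (Suc n)) * (1 / (1 + eps (Suc n))\<^sup>2) = Rop (\<lambda>k. 1 + eps k) n - 1) sequentially"
  proof eventually_elim
    case (elim n)
    then have "(1 + eps (Suc n))\<^sup>2 \<noteq> 0"
      by simp
    then have R: "Rop (\<lambda>k. 1 + eps k) n - 1 = (eps n + eps (Suc (Suc n)) + eps n * eps (Suc (Suc n))
        - 2 * eps (Suc n) - eps (Suc n) * eps (Suc n)) / (1 + eps (Suc n))\<^sup>2"
      by (simp add: Rop_def field_simps power2_eq_square)
    show ?case
      unfolding R by simp
  qed
  ultimately show ?thesis
    by (simp add: landau_o.small.in_cong)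
qed

text \<open>For \<open>x = Rop b - 1\<close>, the expression \<open>(1 + x (n+1))^2 * Rop x n\<close> is \<open>Rop (Lop b) n\<close>
  (lemma \<open>Rop_Lop\<close> below).\<close>

lemma Rop_relative_perturbation:
  assumes x: "eventually (\<lambda>n. x n = h n * (1 + eps n)) sequentially"
    and eps: "eps \<in> o(\<lambda>n. real n powr (-d))" and "0 \<le> d"
    and h0: "h \<longlonglongrightarrow> 0" and Rh: "Rop h \<longlonglongrightarrow> 1"
  shows "(\<lambda>n. (1 + x (Suc n))\<^sup>2 * Rop x n - (1 + h (Suc n))\<^sup>2 * Rop h n) \<in> o(\<lambda>n. real n powr (-d))"
proof -
  have eps0: "eps \<longlonglongrightarrow> 0"
    using smallo_powr_tendsto_0[OF eps \<open>0 \<le> d\<close>] .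
  have "(\<lambda>n. h n * (1 + eps n)) \<longlonglongrightarrow> 0 * (1 + 0)"
    by (intro tendsto_intros h0 eps0)
  then have x0: "x \<longlonglongrightarrow> 0"
    using x by (simp add: tendsto_cong)
  define T where "T n = (Rop (\<lambda>k. 1 + eps k) n - 1) * (1 + x (Suc n))\<^sup>2
    + eps (Suc n) * (h (Suc n) * (2 + x (Suc n) + h (Suc n)))" for n
  have "(\<lambda>n. (1 + x (Suc n))\<^sup>2) \<longlonglongrightarrow> (1 + 0)\<^sup>2"
    using LIMSEQ_Suc[OF x0] by (intro tendsto_intros)
  then have "(\<lambda>n. (Rop (\<lambda>k. 1 + eps k) n - 1) * (1 + x (Suc n))\<^sup>2) \<in> o(\<lambda>n. real n powr (-d))"
    using Rop_one_plus_smallo[OF eps \<open>0 \<le> d\<close>] by (intro landau_o.small_1_mult convergent_bigo_1)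
  moreover have "(\<lambda>n. h (Suc n) * (2 + x (Suc n) + h (Suc n))) \<longlonglongrightarrow> 0 * (2 + 0 + 0)"
    using LIMSEQ_Suc[OF x0] LIMSEQ_Suc[OF h0] by (intro tendsto_intros)
  then have "(\<lambda>n. eps (Suc n) * (h (Suc n) * (2 + x (Suc n) + h (Suc n)))) \<in> o(\<lambda>n. real n powr (-d))"
    using smallo_powr_Suc[OF eps] by (intro landau_o.small_1_mult convergent_bigo_1)
  ultimately have "T \<in> o(\<lambda>n. real n powr (-d))"
    unfolding T_def by (rule sum_in_smallo)
  then have "(\<lambda>n. T n * Rop h n) \<in> o(\<lambda>n. real n powr (-d))"
    using Rh by (intro landau_o.small_1_mult convergent_bigo_1)
  moreover have "eventually (\<lambda>n. T n * Rop h n =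
      (1 + x (Suc n))\<^sup>2 * Rop x n - (1 + h (Suc n))\<^sup>2 * Rop h n) sequentially"
    using x eventually_sequentially_Suc[THEN iffD2, OF x] Rop_eventually_cong[OF x]
  proof eventually_elim
    case (elim n)
    then have "Rop x n = Rop h n * Rop (\<lambda>k. 1 + eps k) n"
      by (simp add: Rop_mult)
    with elim(2) show ?case
      by (simp add: T_def algebra_simps power2_eq_square)
  qed
  ultimately show ?thesis
    by (simp add: landau_o.small.in_cong)
qed

lemma Lop_eq_Rop: "b (Suc n) \<noteq> 0 \<Longrightarrow> Lop b n = (b (Suc n))\<^sup>2 * (Rop b n - 1)"
  by (simp add: Lop_def Rop_def field_simps)

lemma Rop_Lop:
  assumes "b (Suc n) \<noteq> 0" "b (Suc (Suc n)) \<noteq> 0" "b (Suc (Suc (Suc n))) \<noteq> 0"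
    and "Rop b (Suc n) - 1 \<noteq> 0"
  shows "Rop (Lop b) n = (1 + (Rop b (Suc n) - 1))\<^sup>2 * Rop (\<lambda>k. Rop b k - 1) n"
proof -
  have "1 + (Rop b (Suc n) - 1) = b (Suc n) * b (Suc (Suc (Suc n))) / (b (Suc (Suc n)))\<^sup>2"
    by (simp add: Rop_def)
  then show ?thesis
    using assms by (simp add: Rop_def Lop_eq_Rop field_simps power2_eq_square)
qed

text \<open>The hypothesis of the theorem in a form that survives one application of \<open>Lop\<close>.\<close>

definition ratio_expansion :: "(nat \<Rightarrow> real) \<Rightarrow> real \<Rightarrow> real \<Rightarrow> bool" where
  "ratio_expansion b g d \<longleftrightarrow> eventually (\<lambda>n. b n > 0) sequentially \<and>
     (\<exists>h. smooth_expansion h g \<and> (\<lambda>n. Rop b n - 1 - h n) \<in> o(\<lambda>n. real n powr (-d)))"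

lemma ratio_expansion_Lop:
  assumes "ratio_expansion b g d" "0 < g" "g \<le> d"
  shows "ratio_expansion (Lop b) (min g 2) (d - g)"
proof -
  obtain h where b_pos: "eventually (\<lambda>n. b n > 0) sequentially" and h: "smooth_expansion h g"
    and err: "(\<lambda>n. Rop b n - 1 - h n) \<in> o(\<lambda>n. real n powr (-d))"
    using assms(1) unfolding ratio_expansion_def by blast
  define x where "x = (\<lambda>n. Rop b n - 1)"
  define eps where "eps = (\<lambda>n. (x n - h n) / h n)"
  have x_eq: "eventually (\<lambda>n. x n = h n * (1 + eps n)) sequentially"
    using smooth_expansion_eventually_pos[OF h] by eventually_elim (simp add: eps_def field_simps)
  \<comment> \<open>Passing to the relative error costs \<open>g\<close> in the error exponent, since \<open>1/h = O(n^g)\<close>.\<close>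
  have "(\<lambda>n. (x n - h n) * (1 / h n)) \<in> o(\<lambda>n. real n powr (-d + g))"
    using smallo_bigo_powr_mult[OF err smooth_expansion_inverse_bigo[OF h]] by (simp add: x_def)
  then have eps: "eps \<in> o(\<lambda>n. real n powr (-(d - g)))"
    by (simp add: eps_def)
  have "eventually (\<lambda>n. eps n > -1) sequentially"
    using smallo_powr_tendsto_0[OF eps] assms(3) by (intro order_tendstoD) auto
  with x_eq smooth_expansion_eventually_pos[OF h] have x_pos: "eventually (\<lambda>n. x n > 0) sequentially"
    by eventually_elim (simp add: add_pos_pos)
  have "eventually (\<lambda>n. Lop b n > 0) sequentially"
    using eventually_sequentially_Suc[THEN iffD2, OF b_pos] x_pos
    by eventually_elim (simp add: Lop_eq_Rop x_def)
  moreover have "(\<lambda>n. (1 + x (Suc n))\<^sup>2 * Rop x n - (1 + h (Suc n))\<^sup>2 * Rop h n) \<in> o(\<lambda>n. real n powr (-(d - g)))"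
  proof (rule Rop_relative_perturbation[OF x_eq eps])
    show "h \<longlonglongrightarrow> 0"
      using h assms(2) by (rule smooth_expansion_tendsto_0)
    show "Rop h \<longlonglongrightarrow> 1"
      using smooth_expansion_tendsto_0[OF smooth_expansion_Rop_minus_1[OF h assms(2)]]
      by (simp add: LIM_zero_cancel)
  qed (use assms(3) in simp)
  moreover have "eventually (\<lambda>n. (1 + x (Suc n))\<^sup>2 * Rop x n - (1 + h (Suc n))\<^sup>2 * Rop h n
      = Rop (Lop b) n - 1 - ((1 + h (Suc n))\<^sup>2 * Rop h n - 1)) sequentially"
    using b_pos eventually_sequentially_Suc[THEN iffD2, OF x_pos]
      eventually_sequentially_Suc[THEN iffD2, OF b_pos]
      eventually_sequentially_Suc[THEN iffD2, OF eventually_sequentially_Suc[THEN iffD2, OF b_pos]]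
      eventually_sequentially_Suc[THEN iffD2, OF eventually_sequentially_Suc[THEN iffD2,
        OF eventually_sequentially_Suc[THEN iffD2, OF b_pos]]]
    by eventually_elim (simp add: Rop_Lop x_def)
  ultimately show ?thesis
    using smooth_expansion_next_level[OF h assms(2)]
    unfolding ratio_expansion_def by (auto simp: landau_o.small.in_cong)
qed

lemma eventually_pos_funpow_Lop:
  assumes "ratio_expansion b g d" "0 < g" "g + real k * min g 2 \<le> d"
  shows "eventually (\<lambda>n. (Lop ^^ Suc k) b n > 0) sequentially"
  using assms
proof (induction k arbitrary: b g d)
  case 0
  then show ?case
    using ratio_expansion_Lop[of b g d] by (simp add: ratio_expansion_def)
next
  case (Suc k)
  have "0 \<le> real (Suc k) * min g 2"
    using Suc.prems(2) by simp
  with Suc.prems(3) have "g \<le> d"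
    by linarith
  with Suc.prems(1,2) have "ratio_expansion (Lop b) (min g 2) (d - g)"
    by (rule ratio_expansion_Lop)
  moreover have "min g 2 + real k * min (min g 2) 2 \<le> d - g"
    using Suc.prems(3) by (simp add: algebra_simps)
  ultimately have "eventually (\<lambda>n. (Lop ^^ Suc k) (Lop b) n > 0) sequentially"
    using Suc.IH Suc.prems(2) by simp
  then show ?case
    by (simp only: funpow_Suc_right comp_def)
qed

lemma puiseux_order_condition:
  fixes \<alpha> \<beta> :: real
  assumes "0 < \<alpha>" "\<alpha> \<le> \<beta>"
    and "k < (if \<alpha> < 2 then nat \<lfloor>\<beta> / \<alpha>\<rfloor> else nat \<lfloor>(\<beta> - \<alpha>) / 2\<rfloor> + 1)"
  shows "\<alpha> + real k * min \<alpha> 2 \<le> \<beta>"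
proof (cases "\<alpha> < 2")
  case True
  with assms(3) have "real (k + 1) \<le> real (nat \<lfloor>\<beta> / \<alpha>\<rfloor>)"
    by simp
  also have "\<dots> \<le> \<beta> / \<alpha>"
    using assms(1,2) by (intro of_nat_floor) simp
  finally show ?thesis
    using True assms(1) by (simp add: field_simps)
next
  case False
  with assms(3) have "real k \<le> real (nat \<lfloor>(\<beta> - \<alpha>) / 2\<rfloor>)"
    by simp
  also have "\<dots> \<le> (\<beta> - \<alpha>) / 2"
    using assms(2) by (intro of_nat_floor) simp
  finally show ?thesis
    using False by simp
qed

lemma smooth_expansion_sum_powr:
  fixes cs alph :: "nat \<Rightarrow> real"
  assumes "1 \<le> m" "cs 1 > 0" and "\<And>i. 2 \<le> i \<Longrightarrow> i \<le> m \<Longrightarrow> alph 1 < alph i"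
  shows "smooth_expansion (\<lambda>n. \<Sum>i=1..m. cs i * real n powr (- alph i)) (alph 1)"
proof -
  define e where "e = Min (insert 1 ((\<lambda>i. alph i - alph 1) ` {2..m}))"
  have "e > 0"
    unfolding e_def using assms(3) by (subst Min_gr_iff) auto
  have "smooth_decay (\<lambda>n. \<Sum>i=2..m. cs i * real n powr (alph 1 - alph i)) e"
  proof (rule smooth_decay_sum)
    fix i assume "i \<in> {2..m}"
    then have "e \<le> alph i - alph 1"
      unfolding e_def by (intro Min_le) auto
    then show "smooth_decay (\<lambda>n. cs i * real n powr (alph 1 - alph i)) e"
      by (intro smooth_decay_cmult smooth_decay_mono[OF smooth_decay_powr']) simp
  qed
  moreover have "(\<Sum>i=1..m. cs i * real n powr (- alph i))
      = real n powr (- alph 1) * (cs 1 + (\<Sum>i=2..m. cs i * real n powr (alph 1 - alph i)))" for n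
  proof -
    have "real n powr (- alph 1) * real n powr (alph 1 - alph i) = real n powr (- alph i)" for i
      by (simp flip: powr_add)
    then show ?thesis
      using assms(1) by (simp add: sum.atLeast_Suc_atMost numeral_2_eq_2 sum_distrib_left algebra_simps)
  qed
  ultimately show ?thesis
    using assms(2) \<open>e > 0\<close> by (intro smooth_expansionI) auto
qed

theorem mainTheorem2:
  fixes a :: "nat \<Rightarrow> real" and c \<alpha> \<beta> :: real
    and m :: nat and alph cs :: "nat \<Rightarrow> real"
  assumes pos: "\<And>n. a n > 0"
    and c_pos: "c > 0" and alpha_pos: "0 < \<alpha>" and alpha_le_beta: "\<alpha> \<le> \<beta>"
    and m_ge: "m \<ge> 1"
    and alph1: "alph 1 = \<alpha>" and cs1: "cs 1 = c"
    and alph_mono: "\<And>i j. 1 \<le> i \<Longrightarrow> i < j \<Longrightarrow> j \<le> m \<Longrightarrow> alph i < alph j"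
    and approx: "(\<lambda>n. real n powr \<beta> *
         (a n * a (n + 2) / (a (n + 1))\<^sup>2 - 1 - (\<Sum>i=1..m. cs i * real n powr (- alph i))))
         \<longlonglongrightarrow> 0"
  shows "asymp_r_log_convex
           (if \<alpha> < 2 then nat \<lfloor>\<beta> / \<alpha>\<rfloor> else nat \<lfloor>(\<beta> - \<alpha>) / 2\<rfloor> + 1) a"
proof -
  define r where "r = (if \<alpha> < 2 then nat \<lfloor>\<beta> / \<alpha>\<rfloor> else nat \<lfloor>(\<beta> - \<alpha>) / 2\<rfloor> + 1)"
  have "smooth_expansion (\<lambda>n. \<Sum>i=1..m. cs i * real n powr (- alph i)) \<alpha>"
    using smooth_expansion_sum_powr[of m cs alph] m_ge c_pos alph_mono alph1 cs1 by simp
  moreover have "(\<lambda>n. Rop a n - 1 - (\<Sum>i=1..m. cs i * real n powr (- alph i))) \<in> o(\<lambda>n. real n powr (-\<beta>))"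
    using approx unfolding Rop_def by (rule smallo_powr_of_tendsto)
  ultimately have "ratio_expansion a \<alpha> \<beta>"
    using pos unfolding ratio_expansion_def by auto
  then have "eventually (\<lambda>n. (Lop ^^ Suc k) a n > 0) sequentially" if "k < r" for k
    using alpha_pos puiseux_order_condition[OF alpha_pos alpha_le_beta that[unfolded r_def]]
    by (rule eventually_pos_funpow_Lop)
  then have "eventually (\<lambda>n. \<forall>k\<in>{1..r}. (Lop ^^ k) a n > 0) sequentially"
    by (intro eventually_ball_finite) (auto simp: Suc_le_eq gr0_conv_Suc)
  then show ?thesis
    unfolding asymp_r_log_convex_def r_def[symmetric] eventually_sequentially
    by (auto intro: less_imp_le)
qed

end
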